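(* Let $\lambda_i \ge 0$, $\mu \ge 0$, $\alpha_i \in (0,1]$, $\sigma_i^2 > 0$, $t_i \in \mathbb{R}$, and let $h_i \neq 0$ be a fixed fading coefficient. Consider the maximization problem $$\sup_{p_i \ge 0} \left\{ -\frac{\lambda_i}{\alpha_i}\bigl(t_i - r_i(p_i,h_i)\bigr)_+ - \mu p_i \right\}, \qquad r_i(p_i,h_i) = \log\left(1 + \frac{p_i h_i^2}{\sigma_i^2}\right).$$ If $(\lambda_i,\mu) \neq (0,0)$, then an optimal solution of this problem is $$p_i^*(h_i) = \min\left\{ \left(\frac{\lambda_i}{\mu\alpha_i} - \frac{\sigma_i^2}{h_i^2}\right)_+,\ \frac{\sigma_i^2\left(e^{(t_i)_+}-1\right)}{h_i^2} \right\}.$$ If $(\lambda_i,\mu) = (0,0)$, then $p_i^* = 0$ is optimal.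
   Context: $(x)_+ = \max\{x,0\}$. When $\mu = 0$ and $\lambda_i>0$, the quantity $\frac{\lambda_i}{\mu\alpha_i}$ is interpreted as $+\infty$, so that the minimum equals its second argument. The problem arises as the per-terminal power-allocation subproblem of the Lagrangian dual of a CV@R-constrained (risk-aware) power allocation problem, with $\lambda_i,\mu$ dual variables, $\alpha_i$ a CV@R confidence level, $\sigma_i^2$ the noise variance, and $t_i$ an auxiliary (value-at-risk) variable. *)

theory Defs
  imports Complex_Main
begin

definition pos_part :: "real \<Rightarrow> real" where
  "pos_part x = max x 0"

definition rate :: "real \<Rightarrow> real \<Rightarrow> real \<Rightarrow> real" where
  "rate sigma2 p h = ln (1 + p * h^2 / sigma2)"

definition cvar_obj :: "real \<Rightarrow> real \<Rightarrow> real \<Rightarrow> real \<Rightarrow> real \<Rightarrow> real \<Rightarrow> real \<Rightarrow> real" where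
  "cvar_obj lam mu alpha sigma2 t h p =
     - (lam / alpha) * pos_part (t - rate sigma2 p h) - mu * p"

text \<open>Claimed optimizer; for mu = 0 the quotient lam/(mu*alpha) is +infinity,
  so the minimum equals its second argument.\<close>
definition pstar :: "real \<Rightarrow> real \<Rightarrow> real \<Rightarrow> real \<Rightarrow> real \<Rightarrow> real \<Rightarrow> real" where
  "pstar lam mu alpha sigma2 t h =
     (let b = sigma2 * (exp (pos_part t) - 1) / h^2 in
      if mu = 0 then b
      else min (pos_part (lam / (mu * alpha) - sigma2 / h^2)) b)"

end

theory Submission imports Defs begin

text \<open>With c = lam/alpha and g = h^2/sigma2 the objective is
  F(p) = -c (t - ln(1 + g p))_+ - mu p, which is concave in p, so by the tangent bound for ln
  it suffices to check first-order conditions at the candidate.  Beyond the cap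
  b = (e^(t_+) - 1)/g, where the rate reaches t_+, F has slope -mu; below it, F has slope
  c g/(1 + g p) - mu, which vanishes at the water-filling level c/mu - 1/g.\<close>

definition power_obj :: "real \<Rightarrow> real \<Rightarrow> real \<Rightarrow> real \<Rightarrow> real \<Rightarrow> real" where
  "power_obj c mu g t p = - c * pos_part (t - ln (1 + g * p)) - mu * p"

definition rate_cap :: "real \<Rightarrow> real \<Rightarrow> real" where
  "rate_cap g t = (exp (pos_part t) - 1) / g"

definition water_level :: "real \<Rightarrow> real \<Rightarrow> real \<Rightarrow> real" where
  "water_level c mu g = pos_part (c / mu - 1 / g)"

definition power_opt :: "real \<Rightarrow> real \<Rightarrow> real \<Rightarrow> real \<Rightarrow> real" where
  "power_opt c mu g t =
     (if mu = 0 then rate_cap g t else min (water_level c mu g) (rate_cap g t))"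

lemma ln_le_tangent:
  fixes x y :: real
  assumes "0 < x" and "0 < y"
  shows "ln x \<le> ln y + (x - y) / y"
proof -
  have "ln x - ln y = ln (x / y)"
    using assms by (simp add: ln_div)
  also have "\<dots> \<le> x / y - 1"
    using assms by (intro ln_le_minus_one) simp
  also have "\<dots> = (x - y) / y"
    using assms by (simp add: field_simps)
  finally show ?thesis by simp
qed

lemma power_obj_le_cost:
  assumes "c \<ge> 0"
  shows "power_obj c mu g t p \<le> - mu * p"
  using assms by (simp add: power_obj_def pos_part_def)

lemma power_obj_le_tangent:
  assumes "c \<ge> 0" and "g > 0" and "p \<ge> 0" and "q \<ge> 0"
  shows "power_obj c mu g t p
           \<le> c * (ln (1 + g * q) - t) + c * g * (p - q) / (1 + g * q) - mu * p"
proof -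
  have pos: "1 + g * p > 0" "1 + g * q > 0"
    using assms by (simp_all add: add_pos_nonneg)
  have "ln (1 + g * p) \<le> ln (1 + g * q) + g * (p - q) / (1 + g * q)"
    using ln_le_tangent[OF pos] by (simp add: algebra_simps)
  then have "c * (ln (1 + g * p) - t) \<le> c * (ln (1 + g * q) - t) + c * g * (p - q) / (1 + g * q)"
    using mult_left_mono[OF _ \<open>c \<ge> 0\<close>] by (fastforce simp: algebra_simps)
  moreover have "- c * pos_part (t - ln (1 + g * p)) \<le> c * (ln (1 + g * p) - t)"
    using mult_left_mono[OF max.cobounded1 \<open>c \<ge> 0\<close>, of "t - ln (1 + g * p)" 0]
    by (simp add: pos_part_def algebra_simps)
  ultimately show ?thesis
    unfolding power_obj_def by linarith
qed

lemma power_obj_max_at_zero: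
  assumes "c \<ge> 0" and "mu \<ge> 0" and "t \<le> 0" and "p \<ge> 0"
  shows "power_obj c mu g t p \<le> power_obj c mu g t 0"
proof -
  have "power_obj c mu g t 0 = 0"
    using \<open>t \<le> 0\<close> by (simp add: power_obj_def pos_part_def)
  then show ?thesis
    using power_obj_le_cost[OF \<open>c \<ge> 0\<close>, of mu g t p] mult_nonneg_nonneg[OF \<open>mu \<ge> 0\<close> \<open>p \<ge> 0\<close>]
    by linarith
qed

lemma power_obj_max_saturated:
  assumes "c \<ge> 0" and "mu \<ge> 0" and "g > 0" and "p \<ge> 0" and "q \<ge> 0"
    and rate: "ln (1 + g * q) = t" and marginal: "mu * (1 + g * q) \<le> c * g"
  shows "power_obj c mu g t p \<le> power_obj c mu g t q"
proof -
  have at_q: "power_obj c mu g t q = - mu * q"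
    using rate by (simp add: power_obj_def pos_part_def)
  show ?thesis
  proof (cases "q \<le> p")
    case True
    then show ?thesis
      using at_q power_obj_le_cost[OF \<open>c \<ge> 0\<close>, of mu g t p] mult_left_mono[OF True \<open>mu \<ge> 0\<close>]
      by linarith
  next
    case False
    have "c * g * (p - q) \<le> mu * (1 + g * q) * (p - q)"
      using marginal False by (intro mult_right_mono_neg) simp_all
    then have "c * g * (p - q) / (1 + g * q) \<le> mu * (p - q)"
      using \<open>g > 0\<close> \<open>q \<ge> 0\<close> by (simp add: divide_le_eq add_pos_nonneg mult_ac)
    then show ?thesis
      using at_q rate power_obj_le_tangent[OF \<open>c \<ge> 0\<close> \<open>g > 0\<close> \<open>p \<ge> 0\<close> \<open>q \<ge> 0\<close>, of mu t]
      by (simp add: algebra_simps)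
  qed
qed

lemma power_obj_max_stationary:
  assumes "c \<ge> 0" and "g > 0" and "p \<ge> 0" and "q \<ge> 0"
    and rate: "ln (1 + g * q) \<le> t"
    and marginal: "c * g \<le> mu * (1 + g * q)"
    and balanced: "q > 0 \<Longrightarrow> c * g = mu * (1 + g * q)"
  shows "power_obj c mu g t p \<le> power_obj c mu g t q"
proof -
  have at_q: "power_obj c mu g t q = c * (ln (1 + g * q) - t) - mu * q"
    using rate by (simp add: power_obj_def pos_part_def algebra_simps)
  have "c * g * (p - q) \<le> mu * (1 + g * q) * (p - q)"
  proof (cases "q = 0")
    case True
    then show ?thesis
      using marginal \<open>p \<ge> 0\<close> by (simp add: mult_right_mono)
  next
    case False
    then show ?thesis
      using balanced \<open>q \<ge> 0\<close> by simp
  qed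
  then have "c * g * (p - q) / (1 + g * q) \<le> mu * (p - q)"
    using \<open>g > 0\<close> \<open>q \<ge> 0\<close> by (simp add: divide_le_eq add_pos_nonneg mult_ac)
  then show ?thesis
    using at_q power_obj_le_tangent[OF \<open>c \<ge> 0\<close> \<open>g > 0\<close> \<open>p \<ge> 0\<close> \<open>q \<ge> 0\<close>, of mu t]
    by (simp add: algebra_simps)
qed

lemma rate_cap_nonneg: "g > 0 \<Longrightarrow> rate_cap g t \<ge> 0"
  by (simp add: rate_cap_def pos_part_def)

lemma ln_rate_cap: "g > 0 \<Longrightarrow> ln (1 + g * rate_cap g t) = pos_part t"
  by (simp add: rate_cap_def)

lemma water_level_marginal_ge:
  assumes "mu > 0" and "g > 0" and "0 < p" and "p \<le> water_level c mu g"
  shows "mu * (1 + g * p) \<le> c * g"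
proof -
  have "p \<le> c / mu - 1 / g"
    using assms(3,4) by (simp add: water_level_def pos_part_def max_def split: if_splits)
  then show ?thesis
    using assms(1,2) by (simp add: field_simps)
qed

lemma water_level_marginal_le:
  assumes "mu > 0" and "g > 0"
  shows "c * g \<le> mu * (1 + g * water_level c mu g)"
    and "water_level c mu g > 0 \<Longrightarrow> c * g = mu * (1 + g * water_level c mu g)"
proof -
  have "c / mu - 1 / g \<le> water_level c mu g"
    by (simp add: water_level_def pos_part_def)
  then show "c * g \<le> mu * (1 + g * water_level c mu g)"
    using assms by (simp add: field_simps)
  show "c * g = mu * (1 + g * water_level c mu g)" if "water_level c mu g > 0"
  proof -
    have "water_level c mu g = c / mu - 1 / g"
      using that by (simp add: water_level_def pos_part_def max_def split: if_splits)
    then show ?thesis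
      using assms by (simp add: field_simps)
  qed
qed

lemma power_opt_nonneg: "g > 0 \<Longrightarrow> power_opt c mu g t \<ge> 0"
  by (simp add: power_opt_def rate_cap_nonneg water_level_def pos_part_def)

lemma power_obj_max_at_power_opt:
  assumes "c \<ge> 0" and "mu \<ge> 0" and "g > 0" and "p \<ge> 0"
  shows "power_obj c mu g t p \<le> power_obj c mu g t (power_opt c mu g t)"
proof (cases "t \<le> 0")
  case True
  then have "power_opt c mu g t = 0"
    by (simp add: power_opt_def rate_cap_def water_level_def pos_part_def)
  then show ?thesis
    using power_obj_max_at_zero assms True by simp
next
  case False
  define b where "b = rate_cap g t"
  have b_pos: "b > 0"
    using False \<open>g > 0\<close> by (simp add: b_def rate_cap_def pos_part_def)
  have rate_b: "ln (1 + g * b) = t"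
    using ln_rate_cap[OF \<open>g > 0\<close>] False by (simp add: b_def pos_part_def)
  note saturated = power_obj_max_saturated[OF assms(1-4) less_imp_le[OF b_pos] rate_b]
  show ?thesis
  proof (cases "mu = 0")
    case True
    then show ?thesis
      using saturated \<open>c \<ge> 0\<close> \<open>g > 0\<close> by (simp add: power_opt_def b_def)
  next
    case mu_nonzero: False
    then have "mu > 0" using \<open>mu \<ge> 0\<close> by simp
    define w where "w = water_level c mu g"
    show ?thesis
    proof (cases "b \<le> w")
      case True
      then show ?thesis
        using saturated water_level_marginal_ge[OF \<open>mu > 0\<close> \<open>g > 0\<close> b_pos] mu_nonzero
        by (simp add: power_opt_def b_def w_def)
    next
      case False
      have w_nonneg: "w \<ge> 0"
        by (simp add: w_def water_level_def pos_part_def)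
      have "ln (1 + g * w) \<le> ln (1 + g * b)"
        using False w_nonneg \<open>g > 0\<close> by (simp add: add_pos_nonneg)
      then have "ln (1 + g * w) \<le> t"
        using rate_b by simp
      then have "power_obj c mu g t p \<le> power_obj c mu g t w"
        using power_obj_max_stationary[OF \<open>c \<ge> 0\<close> \<open>g > 0\<close> \<open>p \<ge> 0\<close> w_nonneg]
          water_level_marginal_le[OF \<open>mu > 0\<close> \<open>g > 0\<close>] by (simp add: w_def)
      then show ?thesis
        using False mu_nonzero by (simp add: power_opt_def b_def w_def)
    qed
  qed
qed

lemma cvar_obj_eq_power_obj:
  "cvar_obj lam mu alpha sigma2 t h p = power_obj (lam / alpha) mu (h^2 / sigma2) t p"
  by (simp add: cvar_obj_def power_obj_def rate_def mult.commute)

lemma pstar_eq_power_opt: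
  "pstar lam mu alpha sigma2 t h = power_opt (lam / alpha) mu (h^2 / sigma2) t"
  by (simp add: pstar_def power_opt_def rate_cap_def water_level_def Let_def mult.commute)

theorem theorem1:
  fixes lam mu alpha sigma2 t h :: real
  assumes "lam \<ge> 0" and "mu \<ge> 0" and "0 < alpha" and "alpha \<le> 1"
    and "sigma2 > 0" and "h \<noteq> 0"
  shows "((lam, mu) \<noteq> (0, 0) \<longrightarrow>
            (let ps = pstar lam mu alpha sigma2 t h in
               ps \<ge> 0 \<and> (\<forall>p\<ge>0. cvar_obj lam mu alpha sigma2 t h p \<le> cvar_obj lam mu alpha sigma2 t h ps)))
       \<and> ((lam, mu) = (0, 0) \<longrightarrow>
            (\<forall>p\<ge>0. cvar_obj lam mu alpha sigma2 t h p \<le> cvar_obj lam mu alpha sigma2 t h 0))"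
proof -
  have c: "lam / alpha \<ge> 0" and g: "h^2 / sigma2 > 0"
    using assms by simp_all
  have "pstar lam mu alpha sigma2 t h \<ge> 0"
    using power_opt_nonneg[OF g] by (simp add: pstar_eq_power_opt)
  moreover have "cvar_obj lam mu alpha sigma2 t h p \<le> cvar_obj lam mu alpha sigma2 t h (pstar lam mu alpha sigma2 t h)"
    if "p \<ge> 0" for p
    using power_obj_max_at_power_opt[OF c \<open>mu \<ge> 0\<close> g that]
    by (simp add: cvar_obj_eq_power_obj pstar_eq_power_opt)
  moreover have "(lam, mu) = (0, 0) \<Longrightarrow> cvar_obj lam mu alpha sigma2 t h p = 0" for p
    by (simp add: cvar_obj_def)
  ultimately show ?thesis
    by (simp add: Let_def)
qed

end
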